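(* Let $\mathcal{H}$ be a real separable Hilbert space, let $0<r<1$, let $m,m_0\in\mathcal{H}$, and let $C,C_0$ be self-adjoint, compact, positive operators on $\mathcal{H}$. Then $$\lim_{\gamma\to0^+}\langle m-m_0,[(1-r)(C+\gamma I)+r(C_0+\gamma I)]^{-1}(m-m_0)\rangle=\begin{cases}\|[(1-r)C+rC_0]^{-1/2}(m-m_0)\|^2 & \text{if } m-m_0\in\mathrm{Im}\big([(1-r)C+rC_0]^{1/2}\big),\\ \infty & \text{otherwise}.\end{cases}$$ In particular, $\|[(1-r)C+rC_0]^{-1/2}(m-m_0)\|^2<\infty$ whenever $m-m_0\in\mathrm{Im}(C_0^{1/2})$.
   Context: For a self-adjoint positive compact operator $T$ and $y\in\mathrm{Im}(T^{1/2})$, $T^{-1/2}y$ denotes the unique preimage of $y$ under $T^{1/2}$ lying in $\ker(T)^{\perp}$ (when $\ker T=\{0\}$ this is simply the unique preimage). *)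

theory Defs
  imports "HOL-Analysis.Analysis"
begin

definition selfadjoint_op :: "('a::real_inner \<Rightarrow>\<^sub>L 'a) \<Rightarrow> bool" where
  "selfadjoint_op T \<longleftrightarrow> (\<forall>x y. inner (T x) y = inner x (T y))"

definition positive_op :: "('a::real_inner \<Rightarrow>\<^sub>L 'a) \<Rightarrow> bool" where
  "positive_op T \<longleftrightarrow> (\<forall>x. 0 \<le> inner (T x) x)"

definition compact_op :: "('a::real_normed_vector \<Rightarrow>\<^sub>L 'a) \<Rightarrow> bool" where
  "compact_op T \<longleftrightarrow> compact (closure (blinfun_apply T ` ball 0 1))"

definition separable_space :: "'a::metric_space itself \<Rightarrow> bool" where
  "separable_space _ \<longleftrightarrow> (\<exists>D::'a set. countable D \<and> closure D = UNIV)"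

definition op_sqrt :: "('a::real_inner \<Rightarrow>\<^sub>L 'a) \<Rightarrow> ('a \<Rightarrow>\<^sub>L 'a)" where
  "op_sqrt T = (THE S. selfadjoint_op S \<and> positive_op S \<and> S o\<^sub>L S = T)"

text \<open>\<open>T^{-1/2} y\<close>: the unique preimage of \<open>y\<close> under \<open>T^{1/2}\<close> lying in \<open>ker(T)^\<perp>\<close>.\<close>
definition op_inv_sqrt_apply :: "('a::real_inner \<Rightarrow>\<^sub>L 'a) \<Rightarrow> 'a \<Rightarrow> 'a" where
  "op_inv_sqrt_apply T y =
     (THE x. op_sqrt T x = y \<and> (\<forall>z. T z = 0 \<longrightarrow> inner x z = 0))"

definition op_inv_apply :: "('a \<Rightarrow>\<^sub>L 'b::real_normed_vector) \<Rightarrow> 'b \<Rightarrow> 'a::real_normed_vector" where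
  "op_inv_apply B v = (THE z. B z = v)"

end

theory Submission
  imports Defs "HOL-Computational_Algebra.Formal_Power_Series"
begin

text \<open>Put \<open>T = (1 - r) C + r C0\<close>, \<open>y = m - m0\<close>, \<open>v \<gamma> = (T + \<gamma>)^-1 y\<close> and
  \<open>f \<gamma> = <y, v \<gamma>> = |T^(1/2) (v \<gamma>)|^2 + \<gamma> |v \<gamma>|^2\<close>. For \<open>0 < \<delta> \<le> \<gamma>\<close> one has
  \<open>|T^(1/2) (v \<gamma>) - T^(1/2) (v \<delta>)|^2 \<le> f \<delta> - f \<gamma>\<close>. Hence \<open>f\<close> increases as \<open>\<gamma> \<rightarrow> 0+\<close>, and
  if it stays bounded then \<open>T^(1/2) (v \<gamma>)\<close> converges to some \<open>w\<close> orthogonal to \<open>ker T\<close>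
  with \<open>T^(1/2) w = y\<close>, so that \<open>f \<gamma> = <w, T^(1/2) (v \<gamma>)> \<rightarrow> |w|^2\<close>. Conversely, if
  \<open>y = A^(1/2) x\<close> for some \<open>A\<close> with \<open>r A \<le> T\<close> (such as \<open>A = T\<close> or \<open>A = C0\<close>),
  Cauchy-Schwarz gives \<open>f \<le> |x|^2 / r\<close>.

  The positive square root is built from the binomial series of
  \<open>sqrt (1 - t)\<close>, and \<open>(T + \<gamma>)^-1\<close> from Banach's fixed point theorem.\<close>

section \<open>The binomial series of the square root\<close>

text \<open>\<open>sqrt (1 - t) = (\<Sum>n. sqrt_coeff n * t ^ n)\<close> for \<open>|t| \<le> 1\<close>.\<close>
definition sqrt_coeff :: "nat \<Rightarrow> real" where
  "sqrt_coeff n = (-1) ^ n * ((1/2) gchoose n)"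

lemma sqrt_coeff_0 [simp]: "sqrt_coeff 0 = 1"
  by (simp add: sqrt_coeff_def)

lemma sqrt_coeff_Suc: "sqrt_coeff (Suc n) = sqrt_coeff n * ((real n - 1/2) / (real n + 1))"
proof -
  have "(1/2::real) * ((1/2) gchoose n)
      = real n * ((1/2) gchoose n) + real (Suc n) * ((1/2) gchoose Suc n)"
    by (rule gbinomial_mult_1)
  then have "((1/2::real) gchoose Suc n) = (1/2 - real n) * ((1/2) gchoose n) / (real n + 1)"
    by (simp add: field_simps)
  then show ?thesis
    unfolding sqrt_coeff_def by (simp only:) (simp add: field_simps)
qed

lemma sqrt_coeff_nonpos: "0 < n \<Longrightarrow> sqrt_coeff n \<le> 0"
proof (induction n)
  case (Suc n)
  show ?case
  proof (cases n)
    case (Suc m)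
    then have "sqrt_coeff n \<le> 0" "0 \<le> (real n - 1/2) / (real n + 1)"
      using Suc.IH by auto
    then show ?thesis
      unfolding sqrt_coeff_Suc by (rule mult_nonpos_nonneg)
  qed (simp add: sqrt_coeff_Suc)
qed simp

lemma sum_sqrt_coeff_nonneg: "0 \<le> (\<Sum>k<N. sqrt_coeff k)"
proof (cases N)
  case (Suc m)
  have "(\<Sum>k<N. sqrt_coeff k) = (-1) ^ m * ((1/2::real) - 1 gchoose m)"
    unfolding Suc lessThan_Suc_atMost sqrt_coeff_def
    using gbinomial_sum_lower_neg[of "1/2::real" m] by (simp add: mult.commute)
  also have "\<dots> = (real m - 1/2 gchoose m)"
    by (subst gbinomial_negated_upper) (simp add: field_simps flip: power_mult_distrib)
  also have "\<dots> \<ge> 0"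
    unfolding gbinomial_prod_rev by (intro divide_nonneg_pos prod_nonneg) auto
  finally show ?thesis .
qed simp

lemma sum_abs_sqrt_coeff_le: "(\<Sum>k<N. \<bar>sqrt_coeff k\<bar>) \<le> 2"
proof (cases N)
  case (Suc m)
  have "(\<Sum>k<N. \<bar>sqrt_coeff k\<bar>) = 2 * sqrt_coeff 0 - (\<Sum>k<N. sqrt_coeff k)"
    unfolding Suc sum.lessThan_Suc_shift
    by (simp add: sum_negf[symmetric] sqrt_coeff_nonpos)
  then show ?thesis
    using sum_sqrt_coeff_nonneg[of N] by simp
qed simp

lemma summable_abs_sqrt_coeff: "summable (\<lambda>k. \<bar>sqrt_coeff k\<bar>)"
  by (rule summableI_nonneg_bounded[of _ 2]) (auto simp: sum_abs_sqrt_coeff_le)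

lemma sqrt_coeff_convolution:
  "(\<Sum>i\<le>k. sqrt_coeff i * sqrt_coeff (k - i)) = (if k = 0 then 1 else if k = 1 then -1 else 0)"
proof -
  have "(\<Sum>i\<le>k. sqrt_coeff i * sqrt_coeff (k - i))
      = (-1) ^ k * (\<Sum>i\<le>k. ((1/2::real) gchoose i) * ((1/2) gchoose (k - i)))"
    unfolding sqrt_coeff_def sum_distrib_left
    by (rule sum.cong) (auto simp: power_add[symmetric])
  also have "(\<Sum>i\<le>k. ((1/2::real) gchoose i) * ((1/2) gchoose (k - i))) = (1 gchoose k)"
    using gbinomial_Vandermonde[of "1/2::real" "1/2" k] by (simp add: atMost_atLeast0)
  also have "(1::real) gchoose k = of_nat (1 choose k)"
    by (simp add: binomial_gbinomial)
  finally show ?thesis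
    by (cases k) (auto simp: binomial_eq_0)
qed

section \<open>Series and strong limits in complete spaces\<close>

text \<open>The library's \<open>summable_norm_cancel\<close> is stated for class \<open>banach\<close>, which the sort
  \<open>{real_normed_vector, complete_space}\<close> does not entail.\<close>
lemma summable_if_summable_norm:
  fixes f :: "nat \<Rightarrow> 'a::{real_normed_vector, complete_space}"
  assumes "summable (\<lambda>n. norm (f n))"
  shows "summable f"
proof -
  have dist_le: "dist (\<Sum>i<m. f i) (\<Sum>i<n. f i) \<le> dist (\<Sum>i<m. norm (f i)) (\<Sum>i<n. norm (f i))"
    if "n \<le> m" for m n
  proof -
    have diff: "(\<Sum>i<m. h i) - (\<Sum>i<n. h i) = (\<Sum>i=n..<m. h i)" for h :: "nat \<Rightarrow> 'b::ab_group_add"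
      using that by (simp add: sum_diff_nat_ivl flip: atLeast0LessThan)
    have "dist (\<Sum>i<m. f i) (\<Sum>i<n. f i) \<le> (\<Sum>i=n..<m. norm (f i))"
      unfolding dist_norm diff by (rule norm_sum)
    also have "\<dots> = dist (\<Sum>i<m. norm (f i)) (\<Sum>i<n. norm (f i))"
      unfolding dist_real_def diff by (simp add: sum_nonneg)
    finally show ?thesis .
  qed
  have norms_Cauchy: "Cauchy (\<lambda>n. \<Sum>i<n. norm (f i))"
    using assms by (simp add: summable_iff_convergent Cauchy_convergent_iff)
  have "Cauchy (\<lambda>n. \<Sum>i<n. f i)"
  proof (rule metric_CauchyI)
    fix e :: real
    assume "0 < e"
    then obtain M where M: "\<forall>m\<ge>M. \<forall>n\<ge>M. dist (\<Sum>i<m. norm (f i)) (\<Sum>i<n. norm (f i)) < e"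
      using metric_CauchyD[OF norms_Cauchy] by blast
    have "dist (\<Sum>i<m. f i) (\<Sum>i<n. f i) < e" if "M \<le> m" "M \<le> n" for m n
      using dist_le[of n m] dist_le[of m n] M that
      by (cases "n \<le> m") (auto simp: dist_commute intro: le_less_trans)
    then show "\<exists>M. \<forall>m\<ge>M. \<forall>n\<ge>M. dist (\<Sum>i<m. f i) (\<Sum>i<n. f i) < e"
      by blast
  qed
  then show ?thesis
    by (simp add: summable_iff_convergent Cauchy_convergent_iff)
qed

text \<open>The finite Cauchy product misses exactly the terms with \<open>i + j \<ge> N\<close> of the square
  \<open>{..<N} \<times> {..<N}\<close>; their total size is controlled by the scalar Cauchy product theorem.\<close>
lemma tendsto_square_sum_minus_Cauchy_sum:
  fixes g :: "nat \<Rightarrow> nat \<Rightarrow> 'a::real_normed_vector"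
  assumes a: "summable a" "\<And>i. 0 \<le> a i" and b: "summable b" "\<And>j. 0 \<le> b j"
    and g: "\<And>i j. norm (g i j) \<le> a i * b j"
  shows "(\<lambda>N. (\<Sum>i<N. \<Sum>j<N. g i j) - (\<Sum>k<N. \<Sum>i\<le>k. g i (k - i))) \<longlonglongrightarrow> 0"
proof -
  define Sq Tr where "Sq N = {..<N} \<times> {..<N}" and "Tr N = {(i, j). i + j < (N::nat)}" for N
  have Tr_Sq: "Tr N \<subseteq> Sq N" for N
    by (auto simp: Sq_def Tr_def)
  have defect: "(\<Sum>i<N. \<Sum>j<N. h i j) - (\<Sum>k<N. \<Sum>i\<le>k. h i (k - i))
      = (\<Sum>(i, j)\<in>Sq N - Tr N. h i j)" for h :: "nat \<Rightarrow> nat \<Rightarrow> 'b::ab_group_add" and N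
  proof -
    have "(\<Sum>i<N. \<Sum>j<N. h i j) = (\<Sum>(i, j)\<in>Sq N. h i j)"
      by (simp add: Sq_def sum.cartesian_product)
    moreover have "(\<Sum>k<N. \<Sum>i\<le>k. h i (k - i)) = (\<Sum>(i, j)\<in>Tr N. h i j)"
      by (simp add: Tr_def sum.triangle_reindex)
    ultimately show ?thesis
      using Tr_Sq by (simp add: sum_diff Sq_def)
  qed
  have "(\<lambda>N. (\<Sum>i<N. a i) * (\<Sum>j<N. b j)) \<longlonglongrightarrow> (\<Sum>i. a i) * (\<Sum>j. b j)"
    using a b by (intro tendsto_mult summable_LIMSEQ)
  moreover have "(\<lambda>N. \<Sum>k<N. \<Sum>i\<le>k. a i * b (k - i)) \<longlonglongrightarrow> (\<Sum>i. a i) * (\<Sum>j. b j)"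
    using Cauchy_product_sums[of a b] a b by (simp add: sums_def)
  ultimately have lim: "(\<lambda>N. (\<Sum>(i, j)\<in>Sq N - Tr N. a i * b j)) \<longlonglongrightarrow> 0"
    using tendsto_diff by (fastforce simp: defect[symmetric] sum_product)
  have bound: "norm (\<Sum>(i, j)\<in>Sq N - Tr N. g i j) \<le> (\<Sum>(i, j)\<in>Sq N - Tr N. a i * b j)" for N
    by (rule order_trans[OF norm_sum sum_mono]) (auto simp: g)
  show ?thesis
    unfolding defect by (rule Lim_null_comparison[OF always_eventually[OF allI[OF bound]] lim])
qed

lemma blinfun_strong_limit:
  fixes A :: "nat \<Rightarrow> 'a::real_normed_vector \<Rightarrow>\<^sub>L 'b::real_normed_vector"
  assumes conv: "\<And>x. convergent (\<lambda>n. A n x)" and bound: "\<And>n. norm (A n) \<le> K"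
  obtains L :: "'a \<Rightarrow>\<^sub>L 'b" where "\<And>x. (\<lambda>n. A n x) \<longlonglongrightarrow> L x"
proof -
  define l where "l x = lim (\<lambda>n. A n x)" for x
  have l: "(\<lambda>n. A n x) \<longlonglongrightarrow> l x" for x
    using conv by (simp add: l_def convergent_LIMSEQ_iff)
  have "bounded_linear l"
  proof
    show "l (x + y) = l x + l y" for x y
      using l[of "x + y"] tendsto_add[OF l[of x] l[of y]]
      by (simp add: blinfun.add_right LIMSEQ_unique)
    show "l (r *\<^sub>R x) = r *\<^sub>R l x" for r x
      using l[of "r *\<^sub>R x"] tendsto_scaleR[OF tendsto_const l[of x]]
      by (simp add: blinfun.scaleR_right LIMSEQ_unique)
    have "norm (l x) \<le> norm x * K" for x
    proof (rule LIMSEQ_le_const2[OF tendsto_norm[OF l]])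
      show "\<exists>N. \<forall>n\<ge>N. norm (A n x) \<le> norm x * K"
        using order_trans[OF norm_blinfun mult_right_mono[OF bound norm_ge_zero]]
        by (auto simp: mult.commute)
    qed
    then show "\<exists>K. \<forall>x. norm (l x) \<le> norm x * K"
      by blast
  qed
  then show ?thesis
    using l by (intro that[of "Blinfun l"]) (simp add: bounded_linear_Blinfun_apply)
qed

lemma tendsto_strong_limit_apply:
  fixes A :: "nat \<Rightarrow> 'a::real_normed_vector \<Rightarrow>\<^sub>L 'b::real_normed_vector"
    and L :: "'a \<Rightarrow>\<^sub>L 'b"
  assumes lim: "\<And>x. (\<lambda>n. A n x) \<longlonglongrightarrow> L x" and bound: "\<And>n. norm (A n) \<le> K"
    and X: "X \<longlonglongrightarrow> x"
  shows "(\<lambda>n. A n (X n)) \<longlonglongrightarrow> L x"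
proof -
  have "(\<lambda>n. A n (X n - x)) \<longlonglongrightarrow> 0"
  proof (rule Lim_null_comparison)
    show "\<forall>\<^sub>F n in sequentially. norm (A n (X n - x)) \<le> K * norm (X n - x)"
      using order_trans[OF norm_blinfun mult_right_mono[OF bound norm_ge_zero]] by simp
    show "(\<lambda>n. K * norm (X n - x)) \<longlonglongrightarrow> 0"
      using X by (intro tendsto_mult_right_zero) (simp add: LIM_zero_iff tendsto_norm_zero)
  qed
  then have "(\<lambda>n. A n (X n - x) + A n x) \<longlonglongrightarrow> 0 + L x"
    by (intro tendsto_add lim)
  then show ?thesis
    by (simp add: blinfun.diff_right)
qed

lemma strong_limit_commute:
  fixes A :: "nat \<Rightarrow> 'a::real_normed_vector \<Rightarrow>\<^sub>L 'a" and L X :: "'a \<Rightarrow>\<^sub>L 'a"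
  assumes lim: "\<And>x. (\<lambda>n. A n x) \<longlonglongrightarrow> L x" and comm: "\<And>n x. X (A n x) = A n (X x)"
  shows "X (L x) = L (X x)"
proof -
  have "(\<lambda>n. X (A n x)) \<longlonglongrightarrow> X (L x)"
    by (intro blinfun.tendsto tendsto_const lim)
  then show ?thesis
    using lim[of "X x"] by (simp add: comm LIMSEQ_unique)
qed

section \<open>Positive operators and their square roots\<close>

lemma selfadjoint_opD: "selfadjoint_op T \<Longrightarrow> inner (T x) y = inner x (T y)"
  by (simp add: selfadjoint_op_def)

lemma positive_opD: "positive_op T \<Longrightarrow> 0 \<le> inner (T x) x"
  by (simp add: positive_op_def)

lemma selfadjoint_op_strong_limit:
  fixes A :: "nat \<Rightarrow> 'a::real_inner \<Rightarrow>\<^sub>L 'a" and L :: "'a \<Rightarrow>\<^sub>L 'a"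
  assumes lim: "\<And>x. (\<lambda>n. A n x) \<longlonglongrightarrow> L x" and "\<And>n. selfadjoint_op (A n)"
  shows "selfadjoint_op L"
  unfolding selfadjoint_op_def
proof (intro allI)
  fix x y
  have "(\<lambda>n. inner (A n x) y) \<longlonglongrightarrow> inner (L x) y"
    by (intro tendsto_inner lim tendsto_const)
  moreover have "(\<lambda>n. inner (A n x) y) \<longlonglongrightarrow> inner x (L y)"
    unfolding selfadjoint_opD[OF assms(2)] by (intro tendsto_inner lim tendsto_const)
  ultimately show "inner (L x) y = inner x (L y)"
    by (rule LIMSEQ_unique)
qed

lemma positive_op_strong_limit:
  fixes A :: "nat \<Rightarrow> 'a::real_inner \<Rightarrow>\<^sub>L 'a" and L :: "'a \<Rightarrow>\<^sub>L 'a"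
  assumes lim: "\<And>x. (\<lambda>n. A n x) \<longlonglongrightarrow> L x" and "\<And>n. positive_op (A n)"
  shows "positive_op L"
  unfolding positive_op_def
proof
  fix x
  have "(\<lambda>n. inner (A n x) x) \<longlonglongrightarrow> inner (L x) x"
    by (intro tendsto_inner lim tendsto_const)
  then show "0 \<le> inner (L x) x"
    by (rule LIMSEQ_le_const) (use assms(2) positive_opD in blast)
qed

lemma inner_apply_le_norm_blinfun:
  fixes T :: "'a::real_inner \<Rightarrow>\<^sub>L 'a"
  shows "inner (T x) x \<le> norm T * (norm x)\<^sup>2"
proof -
  have "inner (T x) x \<le> norm (T x) * norm x"
    by (rule norm_cauchy_schwarz)
  also have "\<dots> \<le> norm T * norm x * norm x"
    by (rule mult_right_mono[OF norm_blinfun norm_ge_zero])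
  finally show ?thesis
    by (simp add: power2_eq_square mult.assoc)
qed

lemma norm_apply_sq_le_positive_op:
  fixes T :: "'a::real_inner \<Rightarrow>\<^sub>L 'a"
  assumes sa: "selfadjoint_op T" and pos: "positive_op T"
  shows "(norm (T x))\<^sup>2 \<le> norm T * inner (T x) x"
proof (cases "norm T = 0")
  case True
  then show ?thesis
    using norm_blinfun[of T x] by simp
next
  case False
  define t where "t = 1 / norm T"
  have "0 \<le> inner (T (x - t *\<^sub>R T x)) (x - t *\<^sub>R T x)"
    using pos by (rule positive_opD)
  also have "\<dots> = inner (T x) x - 2 * t * (norm (T x))\<^sup>2 + t\<^sup>2 * inner (T (T x)) (T x)"
    using selfadjoint_opD[OF sa, of "T x" x]
    by (simp add: blinfun.diff_right blinfun.scaleR_right inner_diff_left inner_diff_right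
        inner_commute flip: power2_norm_eq_inner) (simp add: power2_eq_square algebra_simps)
  also have "\<dots> \<le> inner (T x) x - 2 * t * (norm (T x))\<^sup>2 + t\<^sup>2 * (norm T * (norm (T x))\<^sup>2)"
    using inner_apply_le_norm_blinfun[of T "T x"] by (simp add: mult_left_mono)
  also have "\<dots> = inner (T x) x - (norm (T x))\<^sup>2 / norm T"
    using False by (simp add: t_def power2_eq_square field_simps)
  finally show ?thesis
    using False by (simp add: field_simps)
qed

lemma positive_op_apply_eq_0:
  assumes "selfadjoint_op T" "positive_op T" "inner (T x) x = 0"
  shows "T x = 0"
  using norm_apply_sq_le_positive_op[OF assms(1,2), of x] assms(3) by simp

lemma norm_positive_op_le:
  fixes T :: "'a::real_inner \<Rightarrow>\<^sub>L 'a"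
  assumes sa: "selfadjoint_op T" and pos: "positive_op T" and "0 \<le> q"
    and form_le: "\<And>x. inner (T x) x \<le> q * (norm x)\<^sup>2"
  shows "norm T \<le> q"
proof -
  have "norm (T x) \<le> sqrt (norm T * q) * norm x" for x
  proof (rule power2_le_imp_le)
    have "(norm (T x))\<^sup>2 \<le> norm T * (q * (norm x)\<^sup>2)"
      using norm_apply_sq_le_positive_op[OF sa pos, of x] form_le[of x]
      by (meson mult_left_mono norm_ge_zero order_trans)
    then show "(norm (T x))\<^sup>2 \<le> (sqrt (norm T * q) * norm x)\<^sup>2"
      using \<open>0 \<le> q\<close> by (simp add: power_mult_distrib mult.assoc)
  qed (simp add: \<open>0 \<le> q\<close>)
  then have "norm T \<le> sqrt (norm T * q)"
    by (intro norm_blinfun_bound) (simp_all add: \<open>0 \<le> q\<close>)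
  then have "(norm T)\<^sup>2 \<le> (sqrt (norm T * q))\<^sup>2"
    by (rule power_mono) simp
  then have "(norm T)\<^sup>2 \<le> norm T * q"
    using \<open>0 \<le> q\<close> by simp
  then show ?thesis
    using \<open>0 \<le> q\<close> by (cases "norm T = 0") (auto simp: power2_eq_square)
qed

primrec blinfun_pow :: "('a::real_normed_vector \<Rightarrow>\<^sub>L 'a) \<Rightarrow> nat \<Rightarrow> 'a \<Rightarrow>\<^sub>L 'a" where
  "blinfun_pow B 0 = id_blinfun"
| "blinfun_pow B (Suc n) = B o\<^sub>L blinfun_pow B n"

lemma blinfun_pow_apply_add: "blinfun_pow B i (blinfun_pow B j x) = blinfun_pow B (i + j) x"
  by (induction i) auto

lemma norm_blinfun_pow_le: "norm (blinfun_pow B n) \<le> norm B ^ n"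
proof (induction n)
  case (Suc n)
  then show ?case
    using norm_blinfun_compose[of B "blinfun_pow B n"]
    by (simp add: order_trans mult_left_mono)
qed (simp add: norm_blinfun_id_le)

lemma norm_blinfun_pow_le_one: "norm B \<le> 1 \<Longrightarrow> norm (blinfun_pow B k) \<le> 1"
  using norm_blinfun_pow_le[of B k] power_le_one[of "norm B" k] by simp

lemma norm_blinfun_pow_apply_le: "norm B \<le> 1 \<Longrightarrow> norm (blinfun_pow B k x) \<le> norm x"
  by (rule order_trans[OF norm_blinfun mult_left_le_one_le]) (simp_all add: norm_blinfun_pow_le_one)

lemma blinfun_pow_commute:
  fixes B X :: "'a::real_normed_vector \<Rightarrow>\<^sub>L 'a"
  shows "(\<And>z. X (B z) = B (X z)) \<Longrightarrow> X (blinfun_pow B n x) = blinfun_pow B n (X x)"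
  by (induction n arbitrary: x) auto

lemma selfadjoint_blinfun_pow:
  assumes "selfadjoint_op B"
  shows "selfadjoint_op (blinfun_pow B n)"
proof (induction n)
  case (Suc n)
  have "inner (B (blinfun_pow B n x)) y = inner x (blinfun_pow B n (B y))" for x y
    using assms Suc by (simp add: selfadjoint_op_def)
  then show ?case
    by (simp add: selfadjoint_op_def blinfun_pow_commute)
qed (simp add: selfadjoint_op_def)

text \<open>The series is summed pointwise,
  because \<open>'a \<Rightarrow>\<^sub>L 'a\<close> is only known to be complete when \<open>'a\<close> is of class \<open>banach\<close>.\<close>
definition sqrt_partial_sum :: "('a::real_normed_vector \<Rightarrow>\<^sub>L 'a) \<Rightarrow> nat \<Rightarrow> 'a \<Rightarrow>\<^sub>L 'a" where
  "sqrt_partial_sum B N = (\<Sum>k<N. sqrt_coeff k *\<^sub>R blinfun_pow B k)"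

lemma sqrt_partial_sum_apply: "sqrt_partial_sum B N x = (\<Sum>k<N. sqrt_coeff k *\<^sub>R blinfun_pow B k x)"
  by (simp add: sqrt_partial_sum_def blinfun.sum_left blinfun.scaleR_left)

lemma selfadjoint_sqrt_partial_sum: "selfadjoint_op B \<Longrightarrow> selfadjoint_op (sqrt_partial_sum B N)"
  using selfadjoint_blinfun_pow[of B]
  by (simp add: selfadjoint_op_def sqrt_partial_sum_apply inner_sum_left inner_sum_right)

lemma sqrt_partial_sum_commute:
  fixes B X :: "'a::real_normed_vector \<Rightarrow>\<^sub>L 'a"
  assumes "\<And>z. X (B z) = B (X z)"
  shows "X (sqrt_partial_sum B N x) = sqrt_partial_sum B N (X x)"
  by (simp add: sqrt_partial_sum_apply blinfun.sum_right blinfun.scaleR_right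
      blinfun_pow_commute[OF assms])

lemma norm_sqrt_partial_sum_le:
  assumes "norm B \<le> 1"
  shows "norm (sqrt_partial_sum B N) \<le> 2"
proof -
  have "norm (sqrt_partial_sum B N) \<le> (\<Sum>k<N. \<bar>sqrt_coeff k\<bar> * norm (blinfun_pow B k))"
    unfolding sqrt_partial_sum_def by (rule order_trans[OF norm_sum]) simp
  also have "\<dots> \<le> (\<Sum>k<N. \<bar>sqrt_coeff k\<bar>)"
    by (intro sum_mono) (simp add: mult_left_le norm_blinfun_pow_le_one[OF assms])
  finally show ?thesis
    using sum_abs_sqrt_coeff_le[of N] by linarith
qed

lemma convergent_sqrt_partial_sum_apply:
  fixes B :: "'a::{real_normed_vector, complete_space} \<Rightarrow>\<^sub>L 'a"
  assumes "norm B \<le> 1"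
  shows "convergent (\<lambda>N. sqrt_partial_sum B N x)"
proof -
  have "summable (\<lambda>k. sqrt_coeff k *\<^sub>R blinfun_pow B k x)"
  proof (rule summable_if_summable_norm, rule summable_comparison_test')
    show "summable (\<lambda>k. \<bar>sqrt_coeff k\<bar> * norm x)"
      by (intro summable_mult2 summable_abs_sqrt_coeff)
    show "norm (norm (sqrt_coeff k *\<^sub>R blinfun_pow B k x)) \<le> \<bar>sqrt_coeff k\<bar> * norm x" for k
      by (simp add: mult_left_mono norm_blinfun_pow_apply_le[OF assms])
  qed
  then show ?thesis
    by (simp add: sqrt_partial_sum_apply summable_iff_convergent)
qed

text \<open>All coefficients but the first are \<open>\<le> 0\<close>, and \<open><B^k x, x> \<le> |x|^2\<close>; so the quadratic
  form of a partial sum is at least \<open>(\<Sum>k<N. sqrt_coeff k) |x|^2 \<ge> 0\<close>.\<close>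
lemma positive_sqrt_partial_sum:
  fixes B :: "'a::real_inner \<Rightarrow>\<^sub>L 'a"
  assumes "norm B \<le> 1"
  shows "positive_op (sqrt_partial_sum B N)"
  unfolding positive_op_def
proof
  fix x
  have "sqrt_coeff k * (norm x)\<^sup>2 \<le> sqrt_coeff k * inner (blinfun_pow B k x) x" for k
  proof (cases "k = 0")
    case False
    show ?thesis
    proof (rule mult_left_mono_neg)
      show "inner (blinfun_pow B k x) x \<le> (norm x)\<^sup>2"
        using norm_cauchy_schwarz[of "blinfun_pow B k x" x] norm_blinfun_pow_apply_le[OF assms, of k x]
        by (simp add: power2_eq_square mult_right_mono order_trans)
    qed (use False sqrt_coeff_nonpos in auto)
  qed (simp add: power2_norm_eq_inner)
  then have "(\<Sum>k<N. sqrt_coeff k) * (norm x)\<^sup>2 \<le> inner (sqrt_partial_sum B N x) x"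
    unfolding sqrt_partial_sum_apply inner_sum_left sum_distrib_right by (intro sum_mono) simp
  then show "0 \<le> inner (sqrt_partial_sum B N x) x"
    using sum_sqrt_coeff_nonneg[of N] by (meson order_trans zero_le_mult_iff zero_le_power2)
qed

text \<open>The square of a partial sum differs from the truncated Cauchy square of the series, which
  is \<open>1 - B\<close> by \<open>sqrt_coeff_convolution\<close>, by terms that vanish in the limit.\<close>
lemma sqrt_partial_sum_square_tendsto:
  assumes "norm B \<le> 1"
  shows "(\<lambda>N. sqrt_partial_sum B N (sqrt_partial_sum B N x)) \<longlonglongrightarrow> x - B x"
proof -
  let ?c = sqrt_coeff and ?B = "blinfun_pow B"
  have square: "sqrt_partial_sum B N (sqrt_partial_sum B N x)
      = (\<Sum>i<N. \<Sum>j<N. (?c i * ?c j) *\<^sub>R ?B (i + j) x)" for N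
    by (simp add: sqrt_partial_sum_apply blinfun.sum_right blinfun.scaleR_right scaleR_sum_right
        blinfun_pow_apply_add add.commute)
  have Cauchy_square: "(\<Sum>k<N. \<Sum>i\<le>k. (?c i * ?c (k - i)) *\<^sub>R ?B k x) = x - B x" if "2 \<le> N" for N
  proof -
    have "(\<Sum>k<N. \<Sum>i\<le>k. (?c i * ?c (k - i)) *\<^sub>R ?B k x)
        = (\<Sum>k<N. (if k = 0 then 1 else if k = 1 then -1 else 0) *\<^sub>R ?B k x)"
      by (simp add: scaleR_sum_left[symmetric] sqrt_coeff_convolution)
    also have "\<dots> = (\<Sum>k\<in>{0, 1}. (if k = 0 then 1 else if k = 1 then -1 else 0) *\<^sub>R ?B k x)"
      using that by (intro sum.mono_neutral_right) auto
    finally show ?thesis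
      by simp
  qed
  have "(\<lambda>N. sqrt_partial_sum B N (sqrt_partial_sum B N x) - (x - B x)) \<longlonglongrightarrow> 0"
  proof (rule Lim_transform_eventually)
    show "(\<lambda>N. (\<Sum>i<N. \<Sum>j<N. (?c i * ?c j) *\<^sub>R ?B (i + j) x)
        - (\<Sum>k<N. \<Sum>i\<le>k. (?c i * ?c (k - i)) *\<^sub>R ?B (i + (k - i)) x)) \<longlonglongrightarrow> 0"
      by (rule tendsto_square_sum_minus_Cauchy_sum[where a = "\<lambda>i. \<bar>?c i\<bar>"
            and b = "\<lambda>j. \<bar>?c j\<bar> * norm x"])
        (auto simp: summable_abs_sqrt_coeff summable_mult2 abs_mult mult.assoc
          intro!: mult_left_mono norm_blinfun_pow_apply_le[OF assms])
    show "\<forall>\<^sub>F N in sequentially. (\<Sum>i<N. \<Sum>j<N. (?c i * ?c j) *\<^sub>R ?B (i + j) x)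
        - (\<Sum>k<N. \<Sum>i\<le>k. (?c i * ?c (k - i)) *\<^sub>R ?B (i + (k - i)) x)
        = sqrt_partial_sum B N (sqrt_partial_sum B N x) - (x - B x)"
      using eventually_ge_at_top[of 2] by eventually_elim (simp add: square Cauchy_square)
  qed
  then show ?thesis
    by (simp add: LIM_zero_iff)
qed

lemma sqrt_id_minus_exists:
  fixes B :: "'a::{real_inner, complete_space} \<Rightarrow>\<^sub>L 'a"
  assumes "selfadjoint_op B" and "norm B \<le> 1"
  obtains P :: "'a \<Rightarrow>\<^sub>L 'a" where "selfadjoint_op P" "positive_op P" "\<And>x. P (P x) = x - B x"
    "\<And>(X :: 'a \<Rightarrow>\<^sub>L 'a) x. (\<And>z. X (B z) = B (X z)) \<Longrightarrow> X (P x) = P (X x)"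
proof -
  obtain P :: "'a \<Rightarrow>\<^sub>L 'a" where P: "\<And>x. (\<lambda>N. sqrt_partial_sum B N x) \<longlonglongrightarrow> P x"
    using convergent_sqrt_partial_sum_apply[OF assms(2)]
    by (rule blinfun_strong_limit[OF _ norm_sqrt_partial_sum_le[OF assms(2)]]) blast
  show ?thesis
  proof
    show "selfadjoint_op P"
      using P selfadjoint_sqrt_partial_sum[OF assms(1)] by (rule selfadjoint_op_strong_limit)
    show "positive_op P"
      using P positive_sqrt_partial_sum[OF assms(2)] by (rule positive_op_strong_limit)
    show "P (P x) = x - B x" for x
      using tendsto_strong_limit_apply[OF P norm_sqrt_partial_sum_le[OF assms(2)] P]
        sqrt_partial_sum_square_tendsto[OF assms(2)]
      by (rule LIMSEQ_unique)
    show "X (P x) = P (X x)" if "\<And>z. X (B z) = B (X z)" for X :: "'a \<Rightarrow>\<^sub>L 'a" and x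
      using P sqrt_partial_sum_commute[OF that] by (rule strong_limit_commute)
  qed
qed

lemma norm_scaled_id_minus_positive_op_le:
  fixes T :: "'a::real_inner \<Rightarrow>\<^sub>L 'a"
  assumes sa: "selfadjoint_op T" and pos: "positive_op T" and "0 \<le> a" and "a * norm T \<le> b"
  shows "norm (b *\<^sub>R id_blinfun - a *\<^sub>R T) \<le> b"
proof -
  define K where "K = b *\<^sub>R id_blinfun - a *\<^sub>R T"
  have K_apply: "K x = b *\<^sub>R x - a *\<^sub>R T x" for x
    by (simp add: K_def blinfun.diff_left blinfun.scaleR_left)
  have form_K: "inner (K x) x = b * (norm x)\<^sup>2 - a * inner (T x) x" for x
    by (simp add: K_apply inner_diff_left power2_norm_eq_inner)
  have "0 \<le> b"
    using assms(3,4) by (meson mult_nonneg_nonneg norm_ge_zero order_trans)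
  have "selfadjoint_op K"
    using sa by (simp add: selfadjoint_op_def K_apply inner_diff_left inner_diff_right)
  moreover have "positive_op K"
    unfolding positive_op_def form_K
  proof
    fix x
    have "a * inner (T x) x \<le> a * norm T * (norm x)\<^sup>2"
      using inner_apply_le_norm_blinfun[of T x] \<open>0 \<le> a\<close> by (simp add: mult_left_mono mult.assoc)
    also have "\<dots> \<le> b * (norm x)\<^sup>2"
      using assms(4) by (simp add: mult_right_mono)
    finally show "0 \<le> b * (norm x)\<^sup>2 - a * inner (T x) x"
      by simp
  qed
  ultimately have "norm K \<le> b"
    using \<open>0 \<le> b\<close> positive_opD[OF pos] \<open>0 \<le> a\<close>
    by (intro norm_positive_op_le) (simp_all add: form_K)
  then show ?thesis
    by (simp add: K_def)
qed

lemma positive_sqrt_exists: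
  fixes T :: "'a::{real_inner, complete_space} \<Rightarrow>\<^sub>L 'a"
  assumes sa: "selfadjoint_op T" and pos: "positive_op T"
  obtains S :: "'a \<Rightarrow>\<^sub>L 'a" where "selfadjoint_op S" "positive_op S" "S o\<^sub>L S = T"
    "\<And>(X :: 'a \<Rightarrow>\<^sub>L 'a) x. (\<And>z. X (T z) = T (X z)) \<Longrightarrow> X (S x) = S (X x)"
proof -
  define c where "c = norm T + 1"
  have "0 < c"
    by (simp add: c_def add_nonneg_pos)
  define B where "B = id_blinfun - (1 / c) *\<^sub>R T"
  have B_apply: "B x = x - (1 / c) *\<^sub>R T x" for x
    by (simp add: B_def blinfun.diff_left blinfun.scaleR_left)
  have sa_B: "selfadjoint_op B"
    using sa by (simp add: selfadjoint_op_def B_apply inner_diff_left inner_diff_right)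
  have "norm B \<le> 1"
    using norm_scaled_id_minus_positive_op_le[OF sa pos, of "1 / c" 1] \<open>0 < c\<close>
    by (simp add: B_def c_def)
  with sa_B obtain P where P: "selfadjoint_op P" "positive_op P" "\<And>x. P (P x) = x - B x"
    "\<And>(X :: 'a \<Rightarrow>\<^sub>L 'a) x. (\<And>z. X (B z) = B (X z)) \<Longrightarrow> X (P x) = P (X x)"
    by (rule sqrt_id_minus_exists) blast
  show ?thesis
  proof
    show "selfadjoint_op (sqrt c *\<^sub>R P)" "positive_op (sqrt c *\<^sub>R P)"
      using P(1,2) \<open>0 < c\<close> by (simp_all add: selfadjoint_op_def positive_op_def blinfun.scaleR_left)
    show "(sqrt c *\<^sub>R P) o\<^sub>L (sqrt c *\<^sub>R P) = T"
      using \<open>0 < c\<close>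
      by (intro blinfun_eqI) (simp add: blinfun.scaleR_left blinfun.scaleR_right P(3) B_apply)
    show "X ((sqrt c *\<^sub>R P) x) = (sqrt c *\<^sub>R P) (X x)"
      if "\<And>z. X (T z) = T (X z)" for X :: "'a \<Rightarrow>\<^sub>L 'a" and x
      using P(4)[of X] that
      by (simp add: B_apply blinfun.diff_right blinfun.scaleR_right blinfun.scaleR_left)
  qed
qed

text \<open>A second positive square root \<open>S'\<close> commutes with \<open>T = S' S'\<close>, hence with \<open>S\<close>; then
  \<open>(S + S') (S x - S' x) = T x - T x = 0\<close>, and positivity forces \<open>S x = S' x\<close>.\<close>
lemma positive_sqrt_unique:
  fixes S S' :: "'a::real_inner \<Rightarrow>\<^sub>L 'a"
  assumes sa: "selfadjoint_op S" and pos: "positive_op S" and sq: "S o\<^sub>L S = T"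
    and comm: "\<And>(X :: 'a \<Rightarrow>\<^sub>L 'a) x. (\<And>z. X (T z) = T (X z)) \<Longrightarrow> X (S x) = S (X x)"
    and sa': "selfadjoint_op S'" and pos': "positive_op S'" and sq': "S' o\<^sub>L S' = T"
  shows "S' = S"
proof (rule blinfun_eqI)
  fix x
  have SS: "S (S z) = T z" and SS': "S' (S' z) = T z" for z
    using sq sq' by (metis blinfun_apply_blinfun_compose)+
  have "S' (T z) = T (S' z)" for z
    by (simp flip: SS')
  then have S'S: "S' (S z) = S (S' z)" for z
    by (rule comm)
  define y where "y = S x - S' x"
  have "S y + S' y = 0"
    by (simp add: y_def blinfun.diff_right SS SS' S'S)
  then have "inner (S y) y + inner (S' y) y = 0"
    by (metis inner_add_left inner_zero_left)
  then have "inner (S y) y = 0" "inner (S' y) y = 0"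
    using positive_opD[OF pos, of y] positive_opD[OF pos', of y] by linarith+
  then have "S y = 0" "S' y = 0"
    using positive_op_apply_eq_0 sa pos sa' pos' by blast+
  then have "inner y y = 0"
    using selfadjoint_opD[OF sa, of x y] selfadjoint_opD[OF sa', of x y]
    by (simp add: y_def inner_diff_left)
  then show "S' x = S x"
    by (simp add: y_def)
qed

lemma
  fixes T :: "'a::{real_inner, complete_space} \<Rightarrow>\<^sub>L 'a"
  assumes "selfadjoint_op T" "positive_op T"
  shows selfadjoint_op_sqrt: "selfadjoint_op (op_sqrt T)"
    and op_sqrt_apply_apply: "op_sqrt T (op_sqrt T x) = T x"
proof -
  obtain S where S: "selfadjoint_op S" "positive_op S" "S o\<^sub>L S = T"
    "\<And>(X :: 'a \<Rightarrow>\<^sub>L 'a) x. (\<And>z. X (T z) = T (X z)) \<Longrightarrow> X (S x) = S (X x)"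
    using positive_sqrt_exists[OF assms] by blast
  have "op_sqrt T = S"
    unfolding op_sqrt_def
    using S positive_sqrt_unique[OF S] by (intro the_equality) blast+
  with S show "selfadjoint_op (op_sqrt T)" "op_sqrt T (op_sqrt T x) = T x"
    by (simp_all flip: blinfun_apply_blinfun_compose)
qed

lemma norm_op_sqrt_apply_sq:
  fixes T :: "'a::{real_inner, complete_space} \<Rightarrow>\<^sub>L 'a"
  assumes "selfadjoint_op T" "positive_op T"
  shows "(norm (op_sqrt T x))\<^sup>2 = inner (T x) x"
  using selfadjoint_opD[OF selfadjoint_op_sqrt[OF assms], of x "op_sqrt T x"]
  by (simp add: power2_norm_eq_inner op_sqrt_apply_apply[OF assms] inner_commute)

section \<open>Resolvents and the regularised quadratic form\<close>

lemma resolvent_equation_unique_solution: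
  fixes T :: "'a::{real_inner, complete_space} \<Rightarrow>\<^sub>L 'a"
  assumes sa: "selfadjoint_op T" and pos: "positive_op T" and "0 < \<gamma>"
  shows "\<exists>!z. T z + \<gamma> *\<^sub>R z = y"
proof (rule ex_ex1I)
  define c where "c = 1 / (norm T + \<gamma>)"
  define q where "q = c * norm T"
  define K where "K = q *\<^sub>R id_blinfun - c *\<^sub>R T"
  have "0 < norm T + \<gamma>"
    using \<open>0 < \<gamma>\<close> by (simp add: add_nonneg_pos)
  then have "0 < c" "0 \<le> q" "q < 1" and q_eq: "q = 1 - c * \<gamma>"
    using \<open>0 < \<gamma>\<close> by (simp_all add: c_def q_def field_simps)
  have "norm K \<le> q"
    unfolding K_def using \<open>0 < c\<close> by (intro norm_scaled_id_minus_positive_op_le[OF sa pos]) (simp_all add: q_def)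
  then have "norm (K x) \<le> q * norm x" for x
    by (rule order_trans[OF norm_blinfun mult_right_mono[OF _ norm_ge_zero]])
  then have contraction: "\<forall>x x'. dist (K x + c *\<^sub>R y) (K x' + c *\<^sub>R y) \<le> q * dist x x'"
    by (simp add: dist_norm flip: blinfun.diff_right)
  obtain z where "K z + c *\<^sub>R y = z"
    using banach_fix_type[OF \<open>0 \<le> q\<close> \<open>q < 1\<close> contraction] by blast
  then have "c *\<^sub>R (T z + \<gamma> *\<^sub>R z) = c *\<^sub>R y"
    by (simp add: K_def q_eq blinfun.diff_left blinfun.scaleR_left blinfun.add_left algebra_simps)
  then show "\<exists>z. T z + \<gamma> *\<^sub>R z = y"
    using \<open>0 < c\<close> by auto
next
  fix z1 z2
  assume "T z1 + \<gamma> *\<^sub>R z1 = y" "T z2 + \<gamma> *\<^sub>R z2 = y"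
  then have "T (z1 - z2) + \<gamma> *\<^sub>R (z1 - z2) = 0"
    by (simp add: blinfun.diff_right algebra_simps)
  then have "inner (T (z1 - z2)) (z1 - z2) + \<gamma> * (norm (z1 - z2))\<^sup>2 = 0"
    by (metis inner_add_left inner_scaleR_left inner_zero_left power2_norm_eq_inner)
  then have "\<gamma> * (norm (z1 - z2))\<^sup>2 \<le> 0"
    using positive_opD[OF pos, of "z1 - z2"] by linarith
  then show "z1 = z2"
    using \<open>0 < \<gamma>\<close> by (simp add: mult_le_0_iff)
qed

locale positive_operator =
  fixes T :: "'a::{real_inner, complete_space} \<Rightarrow>\<^sub>L 'a"
  assumes selfadjoint: "selfadjoint_op T" and positive: "positive_op T"
begin

abbreviation root :: "'a \<Rightarrow>\<^sub>L 'a" where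
  "root \<equiv> op_sqrt T"

definition resolvent :: "real \<Rightarrow> 'a \<Rightarrow> 'a" where
  "resolvent \<gamma> y = op_inv_apply (T + \<gamma> *\<^sub>R id_blinfun) y"

definition resolvent_form :: "'a \<Rightarrow> real \<Rightarrow> real" where
  "resolvent_form y \<gamma> = inner y (resolvent \<gamma> y)"

lemma root_selfadjoint: "inner (root x) y = inner x (root y)"
  using selfadjoint_op_sqrt[OF selfadjoint positive] by (rule selfadjoint_opD)

lemma root_root_apply: "root (root x) = T x"
  using selfadjoint positive by (rule op_sqrt_apply_apply)

lemma norm_root_apply_sq: "(norm (root x))\<^sup>2 = inner (T x) x"
  using selfadjoint positive by (rule norm_op_sqrt_apply_sq)

lemma resolvent_eq: "0 < \<gamma> \<Longrightarrow> T (resolvent \<gamma> y) + \<gamma> *\<^sub>R resolvent \<gamma> y = y"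
  using theI'[OF resolvent_equation_unique_solution[OF selfadjoint positive, of \<gamma> y]]
  by (simp add: resolvent_def op_inv_apply_def blinfun.add_left blinfun.scaleR_left)

lemma resolvent_form_eq:
  assumes "0 < \<gamma>"
  shows "resolvent_form y \<gamma> = (norm (root (resolvent \<gamma> y)))\<^sup>2 + \<gamma> * (norm (resolvent \<gamma> y))\<^sup>2"
proof -
  have "resolvent_form y \<gamma> = inner (T (resolvent \<gamma> y) + \<gamma> *\<^sub>R resolvent \<gamma> y) (resolvent \<gamma> y)"
    unfolding resolvent_form_def resolvent_eq[OF assms] by (simp add: inner_commute)
  then show ?thesis
    by (simp add: inner_add_left norm_root_apply_sq flip: power2_norm_eq_inner)
qed

lemma resolvent_form_nonneg: "0 < \<gamma> \<Longrightarrow> 0 \<le> resolvent_form y \<gamma>"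
  by (simp add: resolvent_form_eq)

lemma resolvent_diff_eq:
  assumes "0 < \<gamma>" "0 < \<delta>"
  shows "T (resolvent \<delta> y - resolvent \<gamma> y) + \<gamma> *\<^sub>R (resolvent \<delta> y - resolvent \<gamma> y)
    = (\<gamma> - \<delta>) *\<^sub>R resolvent \<delta> y"
  using resolvent_eq[OF assms(1), of y] resolvent_eq[OF assms(2), of y]
  by (simp add: blinfun.diff_right algebra_simps)

lemma resolvent_form_diff_eq:
  assumes "0 < \<gamma>" "0 < \<delta>"
  shows "resolvent_form y \<delta> - resolvent_form y \<gamma> = (\<gamma> - \<delta>) * inner (resolvent \<gamma> y) (resolvent \<delta> y)"
proof -
  have "resolvent_form y \<delta> - resolvent_form y \<gamma>
      = inner (T (resolvent \<gamma> y) + \<gamma> *\<^sub>R resolvent \<gamma> y) (resolvent \<delta> y - resolvent \<gamma> y)"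
    by (simp add: resolvent_form_def resolvent_eq[OF assms(1)] inner_diff_right)
  also have "\<dots> = inner (resolvent \<gamma> y)
      (T (resolvent \<delta> y - resolvent \<gamma> y) + \<gamma> *\<^sub>R (resolvent \<delta> y - resolvent \<gamma> y))"
    by (simp add: inner_add_left inner_add_right selfadjoint_opD[OF selfadjoint])
  finally show ?thesis
    by (simp add: resolvent_diff_eq[OF assms])
qed

text \<open>Write \<open>u = resolvent \<gamma> y\<close>, \<open>v = resolvent \<delta> y\<close>, \<open>d = v - u\<close> and \<open>e = \<gamma> - \<delta>\<close>. The
  resolvent identity reads \<open>(T + \<gamma>) d = e v\<close>; expanding \<open>e\<^sup>2 |v|\<^sup>2 = |(T + \<gamma>) d|\<^sup>2\<close> and using
  \<open>e \<le> \<gamma>\<close> gives \<open>2 <T d, d> + \<gamma> |d|\<^sup>2 \<le> e |v|\<^sup>2\<close>, which is the claim.\<close>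
lemma norm_root_resolvent_diff_sq_le:
  assumes "0 < \<delta>" "\<delta> \<le> \<gamma>"
  shows "(norm (root (resolvent \<gamma> y) - root (resolvent \<delta> y)))\<^sup>2
    \<le> resolvent_form y \<delta> - resolvent_form y \<gamma>"
proof -
  have "0 < \<gamma>"
    using assms by simp
  define u v where "u = resolvent \<gamma> y" and "v = resolvent \<delta> y"
  define d e where "d = v - u" and "e = \<gamma> - \<delta>"
  define p q where "p = inner (T d) d" and "q = (norm d)\<^sup>2"
  have "0 \<le> p" "0 \<le> q" "0 \<le> e"
    using positive_opD[OF positive] assms by (simp_all add: p_def q_def e_def)
  have Td: "T d + \<gamma> *\<^sub>R d = e *\<^sub>R v"
    unfolding d_def e_def u_def v_def using \<open>0 < \<gamma>\<close> assms(1) by (rule resolvent_diff_eq)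
  have "resolvent_form y \<delta> - resolvent_form y \<gamma> = e * inner (v - d) v"
    using resolvent_form_diff_eq[OF \<open>0 < \<gamma>\<close> assms(1)] by (simp add: d_def e_def u_def v_def)
  also have "\<dots> = e * (norm v)\<^sup>2 - inner d (T d + \<gamma> *\<^sub>R d)"
    by (simp add: Td inner_diff_left power2_norm_eq_inner right_diff_distrib)
  finally have form_diff: "resolvent_form y \<delta> - resolvent_form y \<gamma> = e * (norm v)\<^sup>2 - p - \<gamma> * q"
    by (simp add: p_def q_def inner_add_right inner_commute power2_norm_eq_inner)
  have "e\<^sup>2 * (norm v)\<^sup>2 = (norm (T d + \<gamma> *\<^sub>R d))\<^sup>2"
    by (simp add: Td power_mult_distrib)
  also have "\<dots> = (norm (T d))\<^sup>2 + 2 * \<gamma> * p + \<gamma>\<^sup>2 * q"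
    unfolding p_def q_def power2_norm_eq_inner
    by (simp add: inner_commute power2_eq_square algebra_simps)
  finally have expand: "\<gamma> * (2 * p + \<gamma> * q) \<le> e\<^sup>2 * (norm v)\<^sup>2"
    by (simp add: power2_eq_square algebra_simps)
  have "2 * p + \<gamma> * q \<le> e * (norm v)\<^sup>2"
  proof (cases "e = 0")
    case True
    then show ?thesis
      using expand \<open>0 < \<gamma>\<close> by (simp add: mult_le_0_iff)
  next
    case False
    have "e * (2 * p + \<gamma> * q) \<le> \<gamma> * (2 * p + \<gamma> * q)"
      using assms \<open>0 \<le> p\<close> \<open>0 \<le> q\<close> by (intro mult_right_mono) (simp_all add: e_def)
    also have "\<dots> \<le> e * (e * (norm v)\<^sup>2)"
      using expand by (simp add: power2_eq_square)
    finally show ?thesis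
      using False \<open>0 \<le> e\<close> by simp
  qed
  moreover have "(norm (root u - root v))\<^sup>2 = p"
    using norm_root_apply_sq[of d] by (simp add: p_def d_def blinfun.diff_right norm_minus_commute)
  ultimately show ?thesis
    using form_diff by (simp add: u_def v_def)
qed

lemma resolvent_form_antimono: "0 < \<delta> \<Longrightarrow> \<delta> \<le> \<gamma> \<Longrightarrow> resolvent_form y \<gamma> \<le> resolvent_form y \<delta>"
  using order_trans[OF zero_le_power2 norm_root_resolvent_diff_sq_le[of \<delta> \<gamma> y]] by simp

lemma root_resolvent_converges:
  assumes bound: "\<And>\<gamma>. 0 < \<gamma> \<Longrightarrow> resolvent_form y \<gamma> \<le> M"
  obtains w where "((\<lambda>\<gamma>. root (resolvent \<gamma> y)) \<longlongrightarrow> w) (at_right 0)"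
proof -
  let ?u = "\<lambda>\<gamma>. root (resolvent \<gamma> y)"
  define L where "L = (SUP \<gamma>\<in>{0<..}. resolvent_form y \<gamma>)"
  have bdd: "bdd_above (resolvent_form y ` {0<..})"
    by (rule bdd_aboveI2[of _ _ M]) (simp add: bound)
  have form_le_L: "resolvent_form y \<gamma> \<le> L" if "0 < \<gamma>" for \<gamma>
    unfolding L_def using that by (intro cSUP_upper[OF _ bdd]) simp
  have "cauchy_filter (filtermap ?u (at_right 0))"
    unfolding cauchy_filter_metric_filtermap
  proof (intro allI impI)
    fix \<epsilon> :: real
    assume "0 < \<epsilon>"
    then obtain \<gamma>0 where "0 < \<gamma>0" and \<gamma>0: "L - \<epsilon>\<^sup>2 < resolvent_form y \<gamma>0"
      using less_cSUP_iff[OF _ bdd, of "L - \<epsilon>\<^sup>2"] by (auto simp: L_def)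
    have close: "dist (?u \<gamma>) (?u \<delta>) < \<epsilon>" if "0 < \<delta>" "\<delta> \<le> \<gamma>" "\<gamma> < \<gamma>0" for \<gamma> \<delta>
    proof -
      have "(dist (?u \<gamma>) (?u \<delta>))\<^sup>2 \<le> resolvent_form y \<delta> - resolvent_form y \<gamma>"
        unfolding dist_norm using that by (intro norm_root_resolvent_diff_sq_le)
      also have "\<dots> \<le> L - resolvent_form y \<gamma>0"
        using form_le_L[of \<delta>] resolvent_form_antimono[of \<gamma> \<gamma>0 y] that by simp
      also have "\<dots> < \<epsilon>\<^sup>2"
        using \<gamma>0 by simp
      finally show ?thesis
        using \<open>0 < \<epsilon>\<close> by (simp add: power_less_imp_less_base)
    qed
    show "\<exists>P. eventually P (at_right 0) \<and> (\<forall>\<gamma> \<delta>. P \<gamma> \<and> P \<delta> \<longrightarrow> dist (?u \<gamma>) (?u \<delta>) < \<epsilon>)"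
    proof (intro exI conjI allI impI)
      show "eventually (\<lambda>\<gamma>. \<gamma> \<in> {0<..<\<gamma>0}) (at_right 0)"
        using \<open>0 < \<gamma>0\<close> by (rule eventually_at_right_real)
      show "dist (?u \<gamma>) (?u \<delta>) < \<epsilon>" if "\<gamma> \<in> {0<..<\<gamma>0} \<and> \<delta> \<in> {0<..<\<gamma>0}" for \<gamma> \<delta>
        using that close[of \<delta> \<gamma>] close[of \<gamma> \<delta>] by (cases "\<delta> \<le> \<gamma>") (auto simp: dist_commute)
    qed
  qed
  then obtain w where "filtermap ?u (at_right 0) \<le> nhds w"
    by (auto simp: convergent_filter_iff_cauchy[symmetric] convergent_filter_iff)
  then show thesis
    using that by (simp add: filterlim_def)
qed

lemma scaled_resolvent_tendsto_0:
  assumes bound: "\<And>\<gamma>. 0 < \<gamma> \<Longrightarrow> resolvent_form y \<gamma> \<le> M"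
  shows "((\<lambda>\<gamma>. \<gamma> *\<^sub>R resolvent \<gamma> y) \<longlongrightarrow> 0) (at_right 0)"
proof (rule Lim_null_comparison)
  show "\<forall>\<^sub>F \<gamma> in at_right 0. norm (\<gamma> *\<^sub>R resolvent \<gamma> y) \<le> sqrt (\<gamma> * M)"
    unfolding eventually_at_right_field
  proof (intro exI[of _ 1] conjI allI impI)
    fix \<gamma> :: real
    assume "0 < \<gamma>" "\<gamma> < 1"
    then have "(norm (\<gamma> *\<^sub>R resolvent \<gamma> y))\<^sup>2 \<le> \<gamma> * resolvent_form y \<gamma>"
      by (simp add: resolvent_form_eq power2_eq_square algebra_simps)
    also have "\<dots> \<le> \<gamma> * M"
      using \<open>0 < \<gamma>\<close> bound by (simp add: mult_left_mono)
    finally show "norm (\<gamma> *\<^sub>R resolvent \<gamma> y) \<le> sqrt (\<gamma> * M)"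
      by (rule real_le_rsqrt)
  qed simp
  show "((\<lambda>\<gamma>. sqrt (\<gamma> * M)) \<longlongrightarrow> 0) (at_right 0)"
    using tendsto_real_sqrt[OF tendsto_mult_left_zero[OF tendsto_ident_at, of M]]
    by (simp add: mult.commute)
qed

lemma bounded_resolvent_form_limit:
  assumes bound: "\<And>\<gamma>. 0 < \<gamma> \<Longrightarrow> resolvent_form y \<gamma> \<le> M"
  obtains w where "root w = y" "\<And>k. T k = 0 \<Longrightarrow> inner w k = 0"
    "(resolvent_form y \<longlongrightarrow> (norm w)\<^sup>2) (at_right 0)"
proof -
  obtain w where lim: "((\<lambda>\<gamma>. root (resolvent \<gamma> y)) \<longlongrightarrow> w) (at_right 0)"
    using bound by (rule root_resolvent_converges)
  have "((\<lambda>\<gamma>. \<gamma> *\<^sub>R resolvent \<gamma> y) \<longlongrightarrow> 0) (at_right 0)"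
    using bound by (rule scaled_resolvent_tendsto_0)
  then have "((\<lambda>\<gamma>. y - \<gamma> *\<^sub>R resolvent \<gamma> y) \<longlongrightarrow> y) (at_right 0)"
    using tendsto_diff[OF tendsto_const] by fastforce
  moreover have "\<forall>\<^sub>F \<gamma> in at_right 0. y - \<gamma> *\<^sub>R resolvent \<gamma> y = root (root (resolvent \<gamma> y))"
    unfolding eventually_at_right_field root_root_apply
    by (intro exI[of _ 1]) (auto simp: diff_eq_eq resolvent_eq)
  ultimately have "((\<lambda>\<gamma>. root (root (resolvent \<gamma> y))) \<longlongrightarrow> y) (at_right 0)"
    by (rule Lim_transform_eventually)
  moreover have "((\<lambda>\<gamma>. root (root (resolvent \<gamma> y))) \<longlongrightarrow> root w) (at_right 0)"
    using lim by (rule blinfun.tendsto[OF tendsto_const])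
  ultimately have root_w: "root w = y"
    using tendsto_unique[OF trivial_limit_at_right_real] by blast
  moreover have "inner w k = 0" if "T k = 0" for k
  proof -
    have "root k = 0"
      using norm_root_apply_sq[of k] that by simp
    then have "inner (root (resolvent \<gamma> y)) k = 0" for \<gamma>
      by (simp add: root_selfadjoint)
    then show ?thesis
      using tendsto_inner[OF lim tendsto_const, of k]
      by (simp add: tendsto_const_iff[OF trivial_limit_at_right_real])
  qed
  moreover have "(resolvent_form y \<longlongrightarrow> (norm w)\<^sup>2) (at_right 0)"
  proof -
    have "resolvent_form y = (\<lambda>\<gamma>. inner w (root (resolvent \<gamma> y)))"
      by (auto simp: resolvent_form_def root_w[symmetric] root_selfadjoint)
    then show ?thesis
      using tendsto_inner[OF tendsto_const lim, of w] by (simp add: power2_norm_eq_inner)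
  qed
  ultimately show thesis
    using that by blast
qed

lemma op_inv_sqrt_apply_eqI:
  assumes "root w = y" and orth: "\<And>k. T k = 0 \<Longrightarrow> inner w k = 0"
  shows "op_inv_sqrt_apply T y = w"
  unfolding op_inv_sqrt_apply_def
proof (rule the_equality)
  show "root w = y \<and> (\<forall>z. T z = 0 \<longrightarrow> inner w z = 0)"
    using assms by blast
next
  fix x
  assume x: "root x = y \<and> (\<forall>z. T z = 0 \<longrightarrow> inner x z = 0)"
  then have "root (x - w) = 0"
    using assms by (simp add: blinfun.diff_right)
  then have "T (x - w) = 0"
    by (metis root_root_apply blinfun.zero_right)
  then have "inner (x - w) (x - w) = 0"
    using x orth by (simp add: inner_diff_left)
  then show "x = w"
    by simp
qed

lemma resolvent_form_le_if_dominated: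
  assumes sa: "selfadjoint_op A" and pos: "positive_op A" and "0 < r"
    and dom: "\<And>x. r * inner (A x) x \<le> inner (T x) x" and "0 < \<gamma>"
  shows "resolvent_form (op_sqrt A x) \<gamma> \<le> (norm x)\<^sup>2 / r"
proof -
  define v where "v = resolvent \<gamma> (op_sqrt A x)"
  define F where "F = resolvent_form (op_sqrt A x) \<gamma>"
  have "0 \<le> F"
    using \<open>0 < \<gamma>\<close> by (simp add: F_def resolvent_form_nonneg)
  have "F = inner x (op_sqrt A v)"
    using selfadjoint_op_sqrt[OF sa pos] by (simp add: F_def v_def resolvent_form_def selfadjoint_opD)
  also have "\<dots> \<le> norm x * norm (op_sqrt A v)"
    by (rule norm_cauchy_schwarz)
  finally have F_sq: "F\<^sup>2 \<le> (norm x)\<^sup>2 * (norm (op_sqrt A v))\<^sup>2"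
    using \<open>0 \<le> F\<close> by (metis power_mono power_mult_distrib)
  have root_A_le: "r * (norm (op_sqrt A v))\<^sup>2 \<le> F"
  proof -
    have "r * (norm (op_sqrt A v))\<^sup>2 \<le> inner (T v) v"
      using dom[of v] by (simp add: norm_op_sqrt_apply_sq[OF sa pos])
    also have "\<dots> \<le> F"
      using resolvent_form_eq[OF \<open>0 < \<gamma>\<close>, of "op_sqrt A x"] \<open>0 < \<gamma>\<close>
      by (simp add: F_def v_def norm_root_apply_sq)
    finally show ?thesis .
  qed
  have "r * F\<^sup>2 \<le> r * ((norm x)\<^sup>2 * (norm (op_sqrt A v))\<^sup>2)"
    using F_sq \<open>0 < r\<close> by (simp add: mult_left_mono)
  also have "\<dots> = (norm x)\<^sup>2 * (r * (norm (op_sqrt A v))\<^sup>2)"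
    by (simp add: algebra_simps)
  also have "\<dots> \<le> (norm x)\<^sup>2 * F"
    using root_A_le by (simp add: mult_left_mono)
  finally show ?thesis
    using \<open>0 < r\<close> \<open>0 \<le> F\<close>
    by (cases "F = 0") (simp_all add: F_def field_simps power2_eq_square)
qed

lemma tendsto_resolvent_form_if_in_range:
  assumes "y \<in> range root"
  shows "(resolvent_form y \<longlongrightarrow> (norm (op_inv_sqrt_apply T y))\<^sup>2) (at_right 0)"
proof -
  obtain x where "y = root x"
    using assms by blast
  then have "resolvent_form y \<gamma> \<le> (norm x)\<^sup>2 / 1" if "0 < \<gamma>" for \<gamma>
    using resolvent_form_le_if_dominated[OF selfadjoint positive, of 1] that by simp
  then obtain w where w: "root w = y" "\<And>k. T k = 0 \<Longrightarrow> inner w k = 0"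
    "(resolvent_form y \<longlongrightarrow> (norm w)\<^sup>2) (at_right 0)"
    by (rule bounded_resolvent_form_limit) auto
  have "op_inv_sqrt_apply T y = w"
    using w(1,2) by (rule op_inv_sqrt_apply_eqI)
  then show ?thesis
    using w(3) by simp
qed

lemma filterlim_resolvent_form_if_not_in_range:
  assumes "y \<notin> range root"
  shows "filterlim (resolvent_form y) at_top (at_right 0)"
  unfolding filterlim_at_top
proof
  fix Z
  have "\<exists>\<gamma>1>0. Z \<le> resolvent_form y \<gamma>1"
  proof (rule ccontr)
    assume "\<not> (\<exists>\<gamma>1>0. Z \<le> resolvent_form y \<gamma>1)"
    then have "resolvent_form y \<gamma> \<le> Z" if "0 < \<gamma>" for \<gamma>
      using that by force
    then obtain w where "root w = y"
      by (rule bounded_resolvent_form_limit) auto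
    then show False
      using assms by blast
  qed
  then obtain \<gamma>1 where "0 < \<gamma>1" "Z \<le> resolvent_form y \<gamma>1"
    by blast
  then show "\<forall>\<^sub>F \<gamma> in at_right 0. Z \<le> resolvent_form y \<gamma>"
    unfolding eventually_at_right_field
    using resolvent_form_antimono[of _ \<gamma>1 y] by (intro exI[of _ \<gamma>1]) force
qed

lemma range_op_sqrt_subset_if_dominated:
  assumes "selfadjoint_op A" "positive_op A" "0 < r" "\<And>x. r * inner (A x) x \<le> inner (T x) x"
  shows "range (op_sqrt A) \<subseteq> range root"
proof
  fix y
  assume "y \<in> range (op_sqrt A)"
  then obtain x where "y = op_sqrt A x"
    by blast
  then have "resolvent_form y \<gamma> \<le> (norm x)\<^sup>2 / r" if "0 < \<gamma>" for \<gamma>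
    using resolvent_form_le_if_dominated[OF assms that] by simp
  then obtain w where "root w = y"
    by (rule bounded_resolvent_form_limit) auto
  then show "y \<in> range root"
    by blast
qed

end

theorem proposition4:
  fixes C C0 :: "'a::{real_inner, complete_space} \<Rightarrow>\<^sub>L 'a"
    and m m0 :: 'a and r :: real
  assumes "separable_space TYPE('a)"
    and "0 < r" and "r < 1"
    and "selfadjoint_op C" and "compact_op C" and "positive_op C"
    and "selfadjoint_op C0" and "compact_op C0" and "positive_op C0"
  shows "(m - m0 \<in> range (op_sqrt ((1 - r) *\<^sub>R C + r *\<^sub>R C0)) \<longrightarrow>
            ((\<lambda>\<gamma>. inner (m - m0)
                 (op_inv_apply ((1 - r) *\<^sub>R (C + \<gamma> *\<^sub>R id_blinfun) + r *\<^sub>R (C0 + \<gamma> *\<^sub>R id_blinfun)) (m - m0)))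
              \<longlongrightarrow> (norm (op_inv_sqrt_apply ((1 - r) *\<^sub>R C + r *\<^sub>R C0) (m - m0)))\<^sup>2) (at_right 0))
       \<and> (m - m0 \<notin> range (op_sqrt ((1 - r) *\<^sub>R C + r *\<^sub>R C0)) \<longrightarrow>
            filterlim (\<lambda>\<gamma>. inner (m - m0)
                 (op_inv_apply ((1 - r) *\<^sub>R (C + \<gamma> *\<^sub>R id_blinfun) + r *\<^sub>R (C0 + \<gamma> *\<^sub>R id_blinfun)) (m - m0)))
              at_top (at_right 0))
       \<and> (m - m0 \<in> range (op_sqrt C0) \<longrightarrow> m - m0 \<in> range (op_sqrt ((1 - r) *\<^sub>R C + r *\<^sub>R C0)))"
proof -
  define T where "T = (1 - r) *\<^sub>R C + r *\<^sub>R C0"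
  have T_apply: "T x = (1 - r) *\<^sub>R C x + r *\<^sub>R C0 x" for x
    by (simp add: T_def blinfun.add_left blinfun.scaleR_left)
  have dominated: "r * inner (C0 x) x \<le> inner (T x) x" for x
    using assms(3) positive_opD[OF assms(6), of x] by (simp add: T_apply inner_add_left)
  interpret positive_operator T
  proof
    show "selfadjoint_op T"
      using assms(4,7) by (simp add: selfadjoint_op_def T_apply inner_add_left inner_add_right)
    show "positive_op T"
      using order_trans[OF _ dominated] assms(2) positive_opD[OF assms(9)]
      by (simp add: positive_op_def)
  qed
  have "(1 - r) *\<^sub>R (C + \<gamma> *\<^sub>R id_blinfun) + r *\<^sub>R (C0 + \<gamma> *\<^sub>R id_blinfun) = T + \<gamma> *\<^sub>R id_blinfun"
    for \<gamma>
    by (simp add: T_def algebra_simps flip: scaleR_add_left)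
  then have "(\<lambda>\<gamma>. inner (m - m0)
      (op_inv_apply ((1 - r) *\<^sub>R (C + \<gamma> *\<^sub>R id_blinfun) + r *\<^sub>R (C0 + \<gamma> *\<^sub>R id_blinfun)) (m - m0)))
    = resolvent_form (m - m0)"
    by (simp add: resolvent_form_def resolvent_def fun_eq_iff)
  then show ?thesis
    unfolding T_def[symmetric]
    using range_op_sqrt_subset_if_dominated[OF assms(7,9,2) dominated]
    by (auto intro: tendsto_resolvent_form_if_in_range filterlim_resolvent_form_if_not_in_range)
qed

end
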